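(* Let $s,r,t,\ell,m$ be integers with $1 \le s \le r \le \ell \le m$ and $1 \le t < \ell$. Then $$\hat{w}_r(t;\ell,m)-\hat{w}_s(t;\ell,m)=q^t\bigl(\hat{\mathfrak w}_{r-1}(t;\ell-1,m-1)-\hat{\mathfrak w}_{s-1}(t;\ell-1,m-1)\bigr).$$ In particular $\hat{w}_r(t;\ell,m)-\hat{w}_1(t;\ell,m)=q^t\,\hat{\mathfrak w}_{r-1}(t;\ell-1,m-1)$.
   Context: $q$ is a prime power. For an $a\times b$ matrix $M=(m_{ij})$ and $0\le r\le a$, $\tau_r(M)=m_{11}+\cdots+m_{rr}$ ($\tau_0=0$). $\mathfrak w_r(t;a,b)$ is the number of $a\times b$ matrices over $\mathbb{F}_q$ of rank exactly $t$ with $\tau_r(M)\ne0$, and $\hat{\mathfrak w}_r(t;a,b)=\mathfrak w_r(t;a,b)/(q-1)$. Also $\hat{w}_r(t;\ell,m)=\sum_{s=1}^t\hat{\mathfrak w}_r(s;\ell,m)$, i.e. $\frac{1}{q-1}$ times the number of $\ell\times m$ matrices $M$ over $\mathbb{F}_q$ with $1\le\mathrm{rk}(M)\le t$ and $\tau_r(M)\ne 0$. *)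

theory Defs
  imports "Jordan_Normal_Form.DL_Rank"
begin

text \<open>Matrices over the finite field 'a (of order q = CARD('a)) are JNF matrices;
  indices are 0-based, so the paper's m_11,...,m_rr are M $$ (0,0),...,M $$ (r-1,r-1).\<close>

definition tau :: "nat \<Rightarrow> 'a::field mat \<Rightarrow> 'a" where
  "tau r M = (\<Sum>i<r. M $$ (i, i))"

definition mat_rank :: "'a::field mat \<Rightarrow> nat" where
  "mat_rank M = vec_space.rank (dim_row M) M"

definition frak_w :: "'a::{finite,field} itself \<Rightarrow> nat \<Rightarrow> nat \<Rightarrow> nat \<Rightarrow> nat \<Rightarrow> nat" where
  "frak_w ty r t a b =
     card {M :: 'a mat. M \<in> carrier_mat a b \<and> mat_rank M = t \<and> tau r M \<noteq> 0}"

definition frak_w_hat :: "'a::{finite,field} itself \<Rightarrow> nat \<Rightarrow> nat \<Rightarrow> nat \<Rightarrow> nat \<Rightarrow> real" where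
  "frak_w_hat ty r t a b = real (frak_w ty r t a b) / (real (card (UNIV :: 'a set)) - 1)"

definition w_hat :: "'a::{finite,field} itself \<Rightarrow> nat \<Rightarrow> nat \<Rightarrow> nat \<Rightarrow> nat \<Rightarrow> real" where
  "w_hat ty r t l m = (\<Sum>s = 1..t. frak_w_hat ty r s l m)"

end

theory Submission
  imports Defs "Berlekamp_Zassenhaus.Berlekamp_Type_Based"
begin

(*
  Write an (n+1) x (k+1) matrix M as a bordered matrix with corner a, first row (a, u), first
  column (a, v) and remaining block N, so that tau_r(M) = a + tau_(r-1)(N).  Splitting the column
  space of M along its first coordinate gives
    rk M = rk N + [v is not in the column space of N] + [(a, u) is not in the row space of (v | N)].
  Hence for fixed N the number of borders (u, v) with rk M <= t does not depend on the corner a,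
  except when rk N = t.  Then the admissible borders are those with u vanishing on ker N and
  v = N y, u . y = a; for u <> 0 their number is independent of a (translate the hyperplane
  u . y = a), while u = 0 contributes all q^t vectors of the column space when a = 0 and nothing
  otherwise.  Summing over the q - 1 corners with a + tau_(r-1)(N) <> 0,
    #{M : rk M <= t, tau_r(M) <> 0} = (q - 1) * C + q^t * frak_w_(r-1)(t; n, k)
  with C independent of r, which cancels in the differences.
*)

lemma card_eq_card_image_mult_fibre:
  assumes "finite A" and "\<And>b. b \<in> f ` A \<Longrightarrow> card {a \<in> A. f a = b} = c"
  shows "card A = card (f ` A) * c"
proof -
  have "A = (\<Union>b \<in> f ` A. {a \<in> A. f a = b})" by auto
  also have "card \<dots> = (\<Sum>b \<in> f ` A. card {a \<in> A. f a = b})"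
    using assms(1) by (intro card_UN_disjoint) auto
  finally show ?thesis using assms(2) by simp
qed

lemma two_le_card_field: "2 \<le> CARD('a::{finite,field})"
  using card_mono[of UNIV "{0, 1::'a}"] by simp

section \<open>Column spaces over a finite field\<close>

definition col_span :: "'a::field mat \<Rightarrow> 'a vec set" where
  "col_span M = (\<lambda>x. M *\<^sub>v x) ` carrier_vec (dim_col M)"

lemma col_span_carrier: "M \<in> carrier_mat n k \<Longrightarrow> col_span M \<subseteq> carrier_vec n"
  unfolding col_span_def by auto

lemma finite_col_span: "finite (col_span (M :: 'a::{finite,field} mat))"
  unfolding col_span_def by simp

lemma mult_mat_vec_in_col_span: "M \<in> carrier_mat n k \<Longrightarrow> x \<in> carrier_vec k \<Longrightarrow> M *\<^sub>v x \<in> col_span M"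
  unfolding col_span_def by auto

lemma col_span_add:
  assumes M: "M \<in> carrier_mat n k" and "w \<in> col_span M" "w' \<in> col_span M"
  shows "w + w' \<in> col_span M"
proof -
  obtain x y where "x \<in> carrier_vec k" "y \<in> carrier_vec k" "w = M *\<^sub>v x" "w' = M *\<^sub>v y"
    using assms unfolding col_span_def by auto
  then show ?thesis
    using M mult_mat_vec_in_col_span[OF M, of "x + y"] by (simp add: mult_add_distrib_mat_vec)
qed

lemma col_span_smult: "M \<in> carrier_mat n k \<Longrightarrow> w \<in> col_span M \<Longrightarrow> c \<cdot>\<^sub>v w \<in> col_span M"
  unfolding col_span_def by (auto intro!: image_eqI[where x = "c \<cdot>\<^sub>v _"] simp: mult_mat_vec)

lemma col_span_minus:
  assumes M: "M \<in> carrier_mat n k" and w: "w \<in> col_span M" and w': "w' \<in> col_span M"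
  shows "w - w' \<in> col_span M"
proof -
  have "w - w' = w + (-1) \<cdot>\<^sub>v w'"
    using col_span_carrier[OF M] w w' by (intro eq_vecI) auto
  then show ?thesis using col_span_add[OF M w col_span_smult[OF M w']] by simp
qed

lemma (in vec_space) span_cols_eq_col_span:
  "M \<in> carrier_mat n k \<Longrightarrow> span (set (cols M)) = col_span M"
  using col_space_eq unfolding col_space_def col_span_def by auto

lemma card_col_span_lin_indpt:
  fixes ws :: "'a::{finite,field} vec list"
  assumes ws: "set ws \<subseteq> carrier_vec n" and "distinct ws"
    and li: "\<not> module.lin_dep class_ring (module_vec TYPE('a) n) (set ws)"
  shows "card (col_span (mat_of_cols n ws)) = CARD('a) ^ length ws"
proof -
  interpret V: vec_space "TYPE('a)" n .
  let ?A = "mat_of_cols n ws"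
  have A: "?A \<in> carrier_mat n (length ws)" by simp
  have "inj_on (\<lambda>x. ?A *\<^sub>v x) (carrier_vec (length ws))"
  proof (rule inj_onI, rule ccontr)
    fix x y assume x: "x \<in> carrier_vec (length ws)" and y: "y \<in> carrier_vec (length ws)"
      and eq: "?A *\<^sub>v x = ?A *\<^sub>v y" and "x \<noteq> y"
    then have nz: "x - y \<noteq> 0\<^sub>v (length ws)"
      using x y by (auto simp: vec_eq_iff)
    have "?A *\<^sub>v (x - y) = 0\<^sub>v n"
      using mult_minus_distrib_mat_vec[OF A x y] eq mult_mat_vec_carrier[OF A y] by simp
    then have "V.lin_dep (set (cols ?A))"
      using V.lin_depI[OF A _ nz] x y \<open>distinct ws\<close> ws by simp
    with li ws show False by simp
  qed
  then have "card (col_span ?A) = card (carrier_vec (length ws) :: 'a vec set)"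
    unfolding col_span_def using A by (simp add: card_image)
  then show ?thesis by (simp add: card_carrier_vec)
qed

lemma card_col_span:
  fixes M :: "'a::{finite,field} mat"
  assumes M: "M \<in> carrier_mat n k"
  shows "card (col_span M) = CARD('a) ^ mat_rank M"
proof -
  interpret V: vec_space "TYPE('a)" n .
  have cols: "set (cols M) \<subseteq> carrier_vec n" using M cols_dim by blast
  have "V.lin_indpt {}" by (simp add: V.lin_dep_def)
  then obtain S where max: "maximal S (\<lambda>T. T \<subseteq> set (cols M) \<and> V.lin_indpt T)"
    and "finite S"
    using maximal_exists_superset[of "set (cols M)" "\<lambda>T. T \<subseteq> set (cols M) \<and> V.lin_indpt T" "{}"]
    by auto
  have SM: "S \<subseteq> set (cols M)" and li: "V.lin_indpt S" using max unfolding maximal_def by auto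
  have S: "S \<subseteq> carrier_vec n" using SM cols by auto
  have "set (cols M) \<subseteq> V.span S"
  proof
    fix c assume c: "c \<in> set (cols M)"
    show "c \<in> V.span S"
    proof (rule ccontr)
      assume "c \<notin> V.span S"
      then have "c \<notin> S" and "V.lin_indpt (S \<union> {c})"
        using V.in_own_span[OF S] V.lin_dep_iff_in_span[OF S li] c cols by auto
      then show False using max c SM unfolding maximal_def by auto
    qed
  qed
  then have "V.span S = V.span (set (cols M))"
    using V.span_is_monotone[OF SM] V.span_subsetI[OF S] by blast
  moreover obtain ws where ws: "set ws = S" "distinct ws"
    using finite_distinct_list[OF \<open>finite S\<close>] by auto
  ultimately have "col_span M = col_span (mat_of_cols n ws)"
    using V.span_cols_eq_col_span[OF M] V.span_cols_eq_col_span[of "mat_of_cols n ws" "length ws"] S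
    by simp
  moreover have "mat_rank M = length ws"
    using V.rank_card_indpt[OF M max] ws distinct_card M unfolding mat_rank_def
    by (metis carrier_matD(1))
  ultimately show ?thesis using card_col_span_lin_indpt[of ws] ws S li by simp
qed

lemma card_line_plus_col_span:
  fixes N :: "'a::{finite,field} mat"
  assumes N: "N \<in> carrier_mat n k" and v: "v \<in> carrier_vec n"
  shows "card {c \<cdot>\<^sub>v v + y | c y. y \<in> col_span N} =
    card (col_span N) * (if v \<in> col_span N then 1 else CARD('a))"
proof (cases "v \<in> col_span N")
  case True
  have "{c \<cdot>\<^sub>v v + y | c y. y \<in> col_span N} = col_span N"
  proof (intro equalityI subsetI)
    fix w assume "w \<in> {c \<cdot>\<^sub>v v + y | c y. y \<in> col_span N}"
    then show "w \<in> col_span N" using col_span_add[OF N col_span_smult[OF N True]] by blast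
  next
    fix w assume w: "w \<in> col_span N"
    then have "w = 0 \<cdot>\<^sub>v v + w" using col_span_carrier[OF N] v by (intro eq_vecI) auto
    then show "w \<in> {c \<cdot>\<^sub>v v + y | c y. y \<in> col_span N}" using w by blast
  qed
  then show ?thesis using True by simp
next
  case False
  have "inj_on (\<lambda>(c, y). c \<cdot>\<^sub>v v + y) (UNIV \<times> col_span N)"
  proof (rule inj_onI, clarify)
    fix c y c' y' assume y: "y \<in> col_span N" and y': "y' \<in> col_span N"
      and eq: "c \<cdot>\<^sub>v v + y = c' \<cdot>\<^sub>v v + y'"
    have yc: "y \<in> carrier_vec n" "y' \<in> carrier_vec n" using y y' col_span_carrier[OF N] by auto
    have "c * v $ i + y $ i = c' * v $ i + y' $ i" if "i < n" for i
      using arg_cong[OF eq, of "\<lambda>w. w $ i"] that yc v by simp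
    then have "(c - c') \<cdot>\<^sub>v v = y' - y"
      using v yc by (intro eq_vecI) (auto simp: algebra_simps add_diff_eq[symmetric])
    then have "(c - c') \<cdot>\<^sub>v v \<in> col_span N" using col_span_minus[OF N y' y] by simp
    then have "c = c'"
      using col_span_smult[OF N, of "(c - c') \<cdot>\<^sub>v v" "1 / (c - c')"] False
      by (cases "c = c'") (auto simp: smult_smult_assoc)
    with eq yc v show "c = c' \<and> y = y'"
      by (auto simp: vec_eq_iff)
  qed
  moreover have "{c \<cdot>\<^sub>v v + y | c y. y \<in> col_span N} = (\<lambda>(c, y). c \<cdot>\<^sub>v v + y) ` (UNIV \<times> col_span N)"
    by auto
  ultimately show ?thesis using False by (simp add: card_image card_cartesian_product)
qed

definition vec_tl :: "'a vec \<Rightarrow> 'a vec" where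
  "vec_tl w = vec (dim_vec w - 1) (\<lambda>i. w $ Suc i)"

lemma vec_tl_vCons [simp]: "vec_tl (vCons c x) = x"
  by (rule eq_vecI) (auto simp: vec_tl_def)

lemma vCons_vec_tl: "z \<in> carrier_vec (Suc k) \<Longrightarrow> vCons (z $ 0) (vec_tl z) = z"
  by (rule eq_vecI) (auto simp: vec_tl_def vec_index_vCons)

lemma vec_tl_carrier: "z \<in> carrier_vec (Suc k) \<Longrightarrow> vec_tl z \<in> carrier_vec k"
  by (auto simp: vec_tl_def)

lemma vCons_add: "dim_vec x = dim_vec y \<Longrightarrow> vCons a x + vCons b y = vCons (a + b) (x + y)"
  by (rule eq_vecI) (auto simp: vec_index_vCons)

lemma vCons_minus: "dim_vec x = dim_vec y \<Longrightarrow> vCons a x - vCons b y = vCons (a - b) (x - y)"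
  by (rule eq_vecI) (auto simp: vec_index_vCons)

lemma card_split_vec_head:
  fixes W :: "'a::field vec set"
  assumes W: "W \<subseteq> carrier_vec (Suc n)" and "finite W"
    and add: "\<And>w w'. w \<in> W \<Longrightarrow> w' \<in> W \<Longrightarrow> w + w' \<in> W"
    and minus: "\<And>w w'. w \<in> W \<Longrightarrow> w' \<in> W \<Longrightarrow> w - w' \<in> W"
  shows "card W = card (vec_tl ` W) * card {c. vCons c (0\<^sub>v n) \<in> W}"
proof (rule card_eq_card_image_mult_fibre[OF \<open>finite W\<close>])
  have split: "vCons (w $ 0) (vec_tl w) = w" if "w \<in> W" for w
    using that W vCons_vec_tl by blast
  have tl: "vec_tl w \<in> carrier_vec n" if "w \<in> W" for w
    using that W vec_tl_carrier by blast
  fix y assume "y \<in> vec_tl ` W"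
  then obtain w0 where w0: "w0 \<in> W" "vec_tl w0 = y" by auto
  have "bij_betw (\<lambda>c. w0 + vCons c (0\<^sub>v n)) {c. vCons c (0\<^sub>v n) \<in> W} {w \<in> W. vec_tl w = y}"
  proof (rule bij_betw_byWitness[where f' = "\<lambda>w. w $ 0 - w0 $ 0"])
    have shift: "w0 + vCons c (0\<^sub>v n) = vCons (w0 $ 0 + c) y" for c
      using split[OF w0(1)] tl[OF w0(1)] w0(2) vCons_add[of y "0\<^sub>v n" "w0 $ 0" c] by auto
    show "\<forall>c \<in> {c. vCons c (0\<^sub>v n) \<in> W}. (w0 + vCons c (0\<^sub>v n)) $ 0 - w0 $ 0 = c"
      unfolding shift by simp
    show "(\<lambda>c. w0 + vCons c (0\<^sub>v n)) ` {c. vCons c (0\<^sub>v n) \<in> W} \<subseteq> {w \<in> W. vec_tl w = y}"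
    proof clarify
      fix c assume "vCons c (0\<^sub>v n) \<in> W"
      from add[OF w0(1) this] show "w0 + vCons c (0\<^sub>v n) \<in> W \<and> vec_tl (w0 + vCons c (0\<^sub>v n)) = y"
        unfolding shift by simp
    qed
    show "\<forall>w \<in> {w \<in> W. vec_tl w = y}. w0 + vCons (w $ 0 - w0 $ 0) (0\<^sub>v n) = w"
      unfolding shift using split by auto
    show "(\<lambda>w. w $ 0 - w0 $ 0) ` {w \<in> W. vec_tl w = y} \<subseteq> {c. vCons c (0\<^sub>v n) \<in> W}"
    proof (rule image_subsetI)
      fix w assume "w \<in> {w \<in> W. vec_tl w = y}"
      then have w: "w \<in> W" "vec_tl w = y" by auto
      have "w - w0 = vCons (w $ 0 - w0 $ 0) (y - y)"
        using split[OF w(1)] split[OF w0(1)] w w0 vCons_minus by metis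
      also have "y - y = 0\<^sub>v n" using tl[OF w0(1)] w0(2) by simp
      finally show "w $ 0 - w0 $ 0 \<in> {c. vCons c (0\<^sub>v n) \<in> W}" using minus[OF w(1) w0(1)] by simp
    qed
  qed
  then show "card {w \<in> W. vec_tl w = y} = card {c. vCons c (0\<^sub>v n) \<in> W}"
    by (simp add: bij_betw_same_card)
qed

lemma card_vCons_zero_in_subspace:
  fixes W :: "'a::{finite,field} vec set"
  assumes smult: "\<And>c w. w \<in> W \<Longrightarrow> c \<cdot>\<^sub>v w \<in> W" and zero: "0\<^sub>v (Suc n) \<in> W"
  shows "card {c. vCons c (0\<^sub>v n) \<in> W} = (if vCons 1 (0\<^sub>v n) \<in> W then CARD('a) else 1)"
proof -
  have smult_vCons: "c \<cdot>\<^sub>v vCons d (0\<^sub>v n) = vCons (c * d) (0\<^sub>v n)" for c d :: 'a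
    by (intro eq_vecI) (auto simp: vec_index_vCons)
  show ?thesis
  proof (cases "vCons 1 (0\<^sub>v n) \<in> W")
    case True
    then have "{c. vCons c (0\<^sub>v n) \<in> W} = UNIV" using smult[OF True] smult_vCons by auto
    then show ?thesis using True by simp
  next
    case False
    have "c = 0" if "vCons c (0\<^sub>v n) \<in> W" for c
      using smult[OF that, of "1 / c"] False smult_vCons[of "1 / c" c] by (cases "c = 0") auto
    then have "{c. vCons c (0\<^sub>v n) \<in> W} = {0}" using zero by (auto simp: zero_vec_Suc)
    then show ?thesis using False by simp
  qed
qed

section \<open>The rank of a bordered matrix\<close>

definition border_mat :: "'a \<Rightarrow> 'a vec \<Rightarrow> 'a vec \<Rightarrow> 'a mat \<Rightarrow> 'a mat" where
  "border_mat a u v N = mat (Suc (dim_row N)) (Suc (dim_col N)) (\<lambda>(i, j).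
     if i = 0 then (if j = 0 then a else u $ (j - 1))
     else (if j = 0 then v $ (i - 1) else N $$ (i - 1, j - 1)))"

lemma dim_border_mat [simp]:
  "dim_row (border_mat a u v N) = Suc (dim_row N)" "dim_col (border_mat a u v N) = Suc (dim_col N)"
  by (simp_all add: border_mat_def)

lemma index_border_mat [simp]:
  "border_mat a u v N $$ (0, 0) = a"
  "j < dim_col N \<Longrightarrow> border_mat a u v N $$ (0, Suc j) = u $ j"
  "i < dim_row N \<Longrightarrow> border_mat a u v N $$ (Suc i, 0) = v $ i"
  "i < dim_row N \<Longrightarrow> j < dim_col N \<Longrightarrow> border_mat a u v N $$ (Suc i, Suc j) = N $$ (i, j)"
  by (simp_all add: border_mat_def)

lemma border_mat_carrier: "N \<in> carrier_mat n k \<Longrightarrow> border_mat a u v N \<in> carrier_mat (Suc n) (Suc k)"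
  by (auto simp: border_mat_def)

lemma border_mat_mult_vCons:
  fixes N :: "'a::field mat"
  assumes N: "N \<in> carrier_mat n k" and u: "u \<in> carrier_vec k" and v: "v \<in> carrier_vec n"
    and x: "x \<in> carrier_vec k"
  shows "border_mat a u v N *\<^sub>v vCons c x = vCons (a * c + u \<bullet> x) (c \<cdot>\<^sub>v v + N *\<^sub>v x)"
proof (rule eq_vecI)
  let ?B = "border_mat a u v N"
  have B: "?B \<in> carrier_mat (Suc n) (Suc k)" using border_mat_carrier[OF N] .
  fix i assume "i < dim_vec (vCons (a * c + u \<bullet> x) (c \<cdot>\<^sub>v v + N *\<^sub>v x))"
  then have i: "i < Suc n" using N v by simp
  show "(?B *\<^sub>v vCons c x) $ i = vCons (a * c + u \<bullet> x) (c \<cdot>\<^sub>v v + N *\<^sub>v x) $ i"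
  proof (cases i)
    case 0
    have "row ?B 0 = vCons a u"
      using N u by (intro eq_vecI) (auto simp: border_mat_def vec_index_vCons)
    then show ?thesis using 0 B by simp
  next
    case (Suc j)
    have "row ?B (Suc j) = vCons (v $ j) (row N j)"
      using N v Suc i by (intro eq_vecI) (auto simp: border_mat_def vec_index_vCons)
    then show ?thesis using Suc i B N v by (simp add: mult.commute)
  qed
qed (use N v in \<open>simp add: border_mat_def\<close>)

lemma col_span_border_mat:
  assumes N: "N \<in> carrier_mat n k" and u: "u \<in> carrier_vec k" and v: "v \<in> carrier_vec n"
  shows "col_span (border_mat a u v N) =
    {vCons (a * c + u \<bullet> x) (c \<cdot>\<^sub>v v + N *\<^sub>v x) | c x. x \<in> carrier_vec k}"
    (is "_ = ?R")
proof -
  have B: "border_mat a u v N \<in> carrier_mat (Suc n) (Suc k)" using border_mat_carrier[OF N] .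
  show ?thesis
  proof (intro equalityI subsetI)
    fix w assume "w \<in> col_span (border_mat a u v N)"
    then obtain z where z: "z \<in> carrier_vec (Suc k)" and "w = border_mat a u v N *\<^sub>v z"
      unfolding col_span_def using B by auto
    then have "w = border_mat a u v N *\<^sub>v vCons (z $ 0) (vec_tl z)" using vCons_vec_tl by metis
    then show "w \<in> ?R"
      using border_mat_mult_vCons[OF N u v vec_tl_carrier[OF z]] vec_tl_carrier[OF z] by blast
  next
    fix w assume "w \<in> ?R"
    then obtain c x where "x \<in> carrier_vec k" "w = vCons (a * c + u \<bullet> x) (c \<cdot>\<^sub>v v + N *\<^sub>v x)"
      by blast
    then show "w \<in> col_span (border_mat a u v N)"
      using mult_mat_vec_in_col_span[OF B, of "vCons c x"] border_mat_mult_vCons[OF N u v] by simp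
  qed
qed

definition vanishes_on_kernel :: "'a::field mat \<Rightarrow> 'a vec \<Rightarrow> bool" where
  "vanishes_on_kernel N u \<longleftrightarrow> (\<forall>x \<in> mat_kernel N. u \<bullet> x = 0)"

(* Equivalently, (a, u) lies in the row space of the lower block (v | N). *)
definition border_row_dependent :: "'a::field \<Rightarrow> 'a vec \<Rightarrow> 'a vec \<Rightarrow> 'a mat \<Rightarrow> bool" where
  "border_row_dependent a u v N \<longleftrightarrow> vanishes_on_kernel N u \<and>
     (v \<notin> col_span N \<or> (\<exists>y \<in> carrier_vec (dim_col N). N *\<^sub>v y = v \<and> a = u \<bullet> y))"

lemma border_row_dependent_vanishes:
  fixes N :: "'a::field mat"
  assumes N: "N \<in> carrier_mat n k" and u: "u \<in> carrier_vec k" and v: "v \<in> carrier_vec n"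
    and dep: "border_row_dependent a u v N"
    and x: "x \<in> carrier_vec k" and ker: "c \<cdot>\<^sub>v v + N *\<^sub>v x = 0\<^sub>v n"
  shows "a * c + u \<bullet> x = 0"
proof (cases "v \<in> col_span N")
  case True
  then obtain y where y: "y \<in> carrier_vec k" "N *\<^sub>v y = v" "a = u \<bullet> y"
    using dep N unfolding border_row_dependent_def by auto
  have "N *\<^sub>v (x + c \<cdot>\<^sub>v y) = c \<cdot>\<^sub>v v + N *\<^sub>v x"
    using N x y v by (simp add: mult_add_distrib_mat_vec mult_mat_vec comm_add_vec)
  then have "x + c \<cdot>\<^sub>v y \<in> mat_kernel N" using N x y ker by (auto intro: mat_kernelI)
  then have "u \<bullet> (x + c \<cdot>\<^sub>v y) = 0"
    using dep unfolding border_row_dependent_def vanishes_on_kernel_def by blast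
  then show ?thesis using u x y by (simp add: scalar_prod_add_distrib[of u k] algebra_simps)
next
  case False
  have "c = 0"
  proof (rule ccontr)
    assume "c \<noteq> 0"
    have "N *\<^sub>v ((- 1 / c) \<cdot>\<^sub>v x) = (- 1 / c) \<cdot>\<^sub>v (N *\<^sub>v x)" using mult_mat_vec[OF N x] .
    also have "N *\<^sub>v x = (- c) \<cdot>\<^sub>v v"
    proof (rule eq_vecI)
      fix i assume "i < dim_vec ((- c) \<cdot>\<^sub>v v)"
      then have "i < n" using v by simp
      then have "c * v $ i + (N *\<^sub>v x) $ i = 0" using arg_cong[OF ker, of "\<lambda>w. w $ i"] N v by simp
      then show "(N *\<^sub>v x) $ i = ((- c) \<cdot>\<^sub>v v) $ i" using \<open>i < n\<close> v by (simp add: add_eq_0_iff)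
    qed (use N v in simp)
    finally have "v = N *\<^sub>v ((- 1 / c) \<cdot>\<^sub>v x)" using \<open>c \<noteq> 0\<close> v by (simp add: smult_smult_assoc)
    then show False using False mult_mat_vec_in_col_span[OF N, of "(- 1 / c) \<cdot>\<^sub>v x"] x by simp
  qed
  then have "N *\<^sub>v x = 0\<^sub>v n" using ker N v by (auto simp: vec_eq_iff)
  then have "x \<in> mat_kernel N" using N x by (auto intro: mat_kernelI)
  then show ?thesis
    using dep \<open>c = 0\<close> unfolding border_row_dependent_def vanishes_on_kernel_def by simp
qed

lemma not_border_row_dependent_witness:
  fixes N :: "'a::field mat"
  assumes N: "N \<in> carrier_mat n k" and u: "u \<in> carrier_vec k" and v: "v \<in> carrier_vec n"
    and "\<not> border_row_dependent a u v N"
  obtains c x where "x \<in> carrier_vec k" "c \<cdot>\<^sub>v v + N *\<^sub>v x = 0\<^sub>v n" "a * c + u \<bullet> x \<noteq> 0"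
proof (cases "vanishes_on_kernel N u")
  case False
  then obtain x where x: "x \<in> mat_kernel N" "u \<bullet> x \<noteq> 0" unfolding vanishes_on_kernel_def by auto
  then have "0 \<cdot>\<^sub>v v + N *\<^sub>v x = 0\<^sub>v n" using N v mat_kernelD[OF N] by (intro eq_vecI) auto
  then show thesis using that[of x 0] x mat_kernelD[OF N] by auto
next
  case True
  then obtain y where y: "y \<in> carrier_vec k" "N *\<^sub>v y = v" "a \<noteq> u \<bullet> y"
    using assms(4) N unfolding border_row_dependent_def col_span_def by auto
  have "1 \<cdot>\<^sub>v v + N *\<^sub>v (- y) = 0\<^sub>v n"
    using N y v by (intro eq_vecI) auto
  moreover have "a * 1 + u \<bullet> (- y) \<noteq> 0"
    using u y by simp
  ultimately show thesis using that[of "- y" 1] y by simp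
qed

lemma unit_in_col_span_border_mat_iff:
  fixes N :: "'a::field mat"
  assumes N: "N \<in> carrier_mat n k" and u: "u \<in> carrier_vec k" and v: "v \<in> carrier_vec n"
  shows "vCons 1 (0\<^sub>v n) \<in> col_span (border_mat a u v N) \<longleftrightarrow> \<not> border_row_dependent a u v N"
proof
  assume "vCons 1 (0\<^sub>v n) \<in> col_span (border_mat a u v N)"
  then obtain c x where "x \<in> carrier_vec k" "a * c + u \<bullet> x = 1" "c \<cdot>\<^sub>v v + N *\<^sub>v x = 0\<^sub>v n"
    unfolding col_span_border_mat[OF N u v] by auto
  then show "\<not> border_row_dependent a u v N"
    using border_row_dependent_vanishes[OF N u v] by force
next
  assume "\<not> border_row_dependent a u v N"
  then obtain c x where x: "x \<in> carrier_vec k" and ker: "c \<cdot>\<^sub>v v + N *\<^sub>v x = 0\<^sub>v n"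
    and d: "a * c + u \<bullet> x \<noteq> 0"
    using not_border_row_dependent_witness[OF N u v] by blast
  define e where "e = 1 / (a * c + u \<bullet> x)"
  have "a * (e * c) + u \<bullet> (e \<cdot>\<^sub>v x) = e * (a * c + u \<bullet> x)"
    using u x by (simp add: algebra_simps)
  also have "\<dots> = 1" using d unfolding e_def by simp
  finally have "a * (e * c) + u \<bullet> (e \<cdot>\<^sub>v x) = 1" .
  moreover have "(e * c) \<cdot>\<^sub>v v + N *\<^sub>v (e \<cdot>\<^sub>v x) = e \<cdot>\<^sub>v (c \<cdot>\<^sub>v v + N *\<^sub>v x)"
    using N v x by (intro eq_vecI) (auto simp: mult_mat_vec algebra_simps)
  ultimately show "vCons 1 (0\<^sub>v n) \<in> col_span (border_mat a u v N)"
    unfolding col_span_border_mat[OF N u v] using x ker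
    by (auto intro!: exI[of _ "e * c"] exI[of _ "e \<cdot>\<^sub>v x"])
qed

lemma rank_border_mat:
  fixes N :: "'a::{finite,field} mat"
  assumes N: "N \<in> carrier_mat n k" and u: "u \<in> carrier_vec k" and v: "v \<in> carrier_vec n"
  shows "mat_rank (border_mat a u v N) = mat_rank N + (if v \<in> col_span N then 0 else 1)
    + (if border_row_dependent a u v N then 0 else 1)"
proof -
  let ?B = "border_mat a u v N"
  have B: "?B \<in> carrier_mat (Suc n) (Suc k)" using border_mat_carrier[OF N] .
  have "vec_tl ` col_span ?B = {c \<cdot>\<^sub>v v + N *\<^sub>v x | c x. x \<in> carrier_vec k}"
  proof (intro equalityI subsetI)
    fix y assume "y \<in> {c \<cdot>\<^sub>v v + N *\<^sub>v x | c x. x \<in> carrier_vec k}"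
    then obtain c x where "x \<in> carrier_vec k" "y = c \<cdot>\<^sub>v v + N *\<^sub>v x" by blast
    then show "y \<in> vec_tl ` col_span ?B"
      unfolding col_span_border_mat[OF N u v]
      by (intro image_eqI[of _ _ "vCons (a * c + u \<bullet> x) y"]) auto
  qed (force simp: col_span_border_mat[OF N u v])
  also have "\<dots> = {c \<cdot>\<^sub>v v + y | c y. y \<in> col_span N}"
    unfolding col_span_def using N by auto
  finally have tl: "card (vec_tl ` col_span ?B) =
      CARD('a) ^ mat_rank N * (if v \<in> col_span N then 1 else CARD('a))"
    using card_line_plus_col_span[OF N v] card_col_span[OF N] by simp
  have head: "card {c. vCons c (0\<^sub>v n) \<in> col_span ?B} =
      (if border_row_dependent a u v N then 1 else CARD('a))"
  proof -
    have "?B *\<^sub>v 0\<^sub>v (Suc k) = 0\<^sub>v (Suc n)" using B by (intro eq_vecI) (auto simp: scalar_prod_def)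
    then have "0\<^sub>v (Suc n) \<in> col_span ?B"
      using mult_mat_vec_in_col_span[OF B, of "0\<^sub>v (Suc k)"] by simp
    then show ?thesis
      using card_vCons_zero_in_subspace[OF col_span_smult[OF B]]
        unit_in_col_span_border_mat_iff[OF N u v]
      by simp
  qed
  have "CARD('a) ^ mat_rank ?B = card (col_span ?B)" using card_col_span[OF B] by simp
  also have "\<dots> = card (vec_tl ` col_span ?B) * card {c. vCons c (0\<^sub>v n) \<in> col_span ?B}"
    by (rule card_split_vec_head[OF col_span_carrier[OF B] finite_col_span col_span_add[OF B]
          col_span_minus[OF B]])
  also have "\<dots> = CARD('a) ^ (mat_rank N + (if v \<in> col_span N then 0 else 1)
      + (if border_row_dependent a u v N then 0 else 1))"
    unfolding tl head by (simp add: power_add)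
  finally show ?thesis using two_le_card_field[where 'a = 'a] by simp
qed

section \<open>Counting the borders of a fixed matrix\<close>

definition rank_le_borders :: "nat \<Rightarrow> 'a::field \<Rightarrow> 'a mat \<Rightarrow> ('a vec \<times> 'a vec) set" where
  "rank_le_borders t a N = {(u, v). u \<in> carrier_vec (dim_col N) \<and> v \<in> carrier_vec (dim_row N) \<and>
     mat_rank (border_mat a u v N) \<le> t}"

lemma rank_le_borders_corner_indep:
  fixes N :: "'a::{finite,field} mat"
  assumes N: "N \<in> carrier_mat n k" and "mat_rank N \<noteq> t"
  shows "rank_le_borders t a N = rank_le_borders t b N"
proof -
  have "mat_rank (border_mat a u v N) \<le> t \<longleftrightarrow> mat_rank (border_mat b u v N) \<le> t"
    if "u \<in> carrier_vec k" "v \<in> carrier_vec n" for u v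
    using rank_border_mat[OF N that] \<open>mat_rank N \<noteq> t\<close>
    by (cases "v \<in> col_span N") (auto simp: border_row_dependent_def)
  then show ?thesis using N unfolding rank_le_borders_def by auto
qed

lemma card_image_hyperplane_eq:
  fixes N :: "'a::{finite,field} mat"
  assumes N: "N \<in> carrier_mat n k" and u: "u \<in> carrier_vec k" and "u \<noteq> 0\<^sub>v k"
  shows "card ((\<lambda>y. N *\<^sub>v y) ` {y \<in> carrier_vec k. u \<bullet> y = b}) =
    card ((\<lambda>y. N *\<^sub>v y) ` {y \<in> carrier_vec k. u \<bullet> y = b'})"
proof -
  obtain i where i: "i < k" "u $ i \<noteq> 0"
    using \<open>u \<noteq> 0\<^sub>v k\<close> u by (auto simp: vec_eq_iff)
  define e where "e = ((b' - b) / u $ i) \<cdot>\<^sub>v unit_vec k i"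
  have e: "e \<in> carrier_vec k" "u \<bullet> e = b' - b" unfolding e_def using i u by auto
  have "{y \<in> carrier_vec k. u \<bullet> y = b'} = (\<lambda>y. y + e) ` {y \<in> carrier_vec k. u \<bullet> y = b}"
  proof (intro equalityI subsetI)
    fix y assume y: "y \<in> {y \<in> carrier_vec k. u \<bullet> y = b'}"
    then have "y = (y - e) + e" "u \<bullet> (y - e) = b"
      using e u by (auto simp: vec_eq_iff scalar_prod_minus_distrib[of u k])
    then show "y \<in> (\<lambda>y. y + e) ` {y \<in> carrier_vec k. u \<bullet> y = b}" using y e by force
  qed (use e u in \<open>auto simp: scalar_prod_add_distrib[of u k]\<close>)
  then have "(\<lambda>y. N *\<^sub>v y) ` {y \<in> carrier_vec k. u \<bullet> y = b'} =
      (\<lambda>w. w + N *\<^sub>v e) ` (\<lambda>y. N *\<^sub>v y) ` {y \<in> carrier_vec k. u \<bullet> y = b}"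
    using N e by (auto simp: image_image mult_add_distrib_mat_vec)
  moreover have "inj_on (\<lambda>w. w + N *\<^sub>v e) ((\<lambda>y. N *\<^sub>v y) ` {y \<in> carrier_vec k. u \<bullet> y = b})"
    using N by (auto simp: inj_on_def vec_eq_iff)
  ultimately show ?thesis by (simp add: card_image)
qed

lemma rank_le_borders_rank_eq:
  fixes N :: "'a::{finite,field} mat"
  assumes N: "N \<in> carrier_mat n k" and "mat_rank N = t"
  shows "rank_le_borders t a N = (SIGMA u : {u \<in> carrier_vec k. vanishes_on_kernel N u}.
    (\<lambda>y. N *\<^sub>v y) ` {y \<in> carrier_vec k. u \<bullet> y = a})"
proof -
  have "mat_rank (border_mat a u v N) \<le> t \<longleftrightarrow>
      vanishes_on_kernel N u \<and> v \<in> (\<lambda>y. N *\<^sub>v y) ` {y \<in> carrier_vec k. u \<bullet> y = a}"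
    if "u \<in> carrier_vec k" "v \<in> carrier_vec n" for u v
    using rank_border_mat[OF N that] \<open>mat_rank N = t\<close> N
    by (auto simp: border_row_dependent_def col_span_def image_iff)
  then show ?thesis using N unfolding rank_le_borders_def by auto
qed

lemma card_rank_le_borders:
  fixes N :: "'a::{finite,field} mat"
  assumes N: "N \<in> carrier_mat n k"
  shows "card (rank_le_borders t a N) =
    card (rank_le_borders t 1 N) + (if a = 0 \<and> mat_rank N = t then CARD('a) ^ t else 0)"
proof (cases "mat_rank N = t")
  case False
  then show ?thesis using rank_le_borders_corner_indep[OF N False, of a 1] by simp
next
  case True
  define C where "C = {u \<in> carrier_vec k. vanishes_on_kernel N u}"
  define A where "A u b = (\<lambda>y. N *\<^sub>v y) ` {y \<in> carrier_vec k. u \<bullet> y = b}" for u b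
  have card_R: "card (rank_le_borders t b N) =
      card (A (0\<^sub>v k) b) + (\<Sum>u \<in> C - {0\<^sub>v k}. card (A u b))" for b
  proof -
    have "0\<^sub>v k \<in> C" unfolding C_def vanishes_on_kernel_def using N mat_kernelD[OF N] by auto
    moreover have "finite C" unfolding C_def by simp
    ultimately show ?thesis
      unfolding rank_le_borders_rank_eq[OF N True] C_def[symmetric] A_def[symmetric]
      by (simp add: sum.remove A_def)
  qed
  have "A (0\<^sub>v k) b = (if b = 0 then col_span N else {})" for b
    unfolding A_def col_span_def using N by auto
  moreover have "card (A u a) = card (A u 1)" if "u \<in> C - {0\<^sub>v k}" for u
    using card_image_hyperplane_eq[OF N] that unfolding A_def C_def by auto
  ultimately show ?thesis
    unfolding card_R using card_col_span[OF N] True by simp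
qed

lemma sum_card_rank_le_borders:
  fixes N :: "'a::{finite,field} mat"
  assumes N: "N \<in> carrier_mat n k"
  shows "(\<Sum>a | a + c \<noteq> 0. card (rank_le_borders t a N)) =
    (CARD('a) - 1) * card (rank_le_borders t 1 N)
    + (if c \<noteq> 0 \<and> mat_rank N = t then CARD('a) ^ t else 0)"
proof -
  define S where "S = {a::'a. a + c \<noteq> 0}"
  define R1 where "R1 = card (rank_le_borders t 1 N)"
  define X where "X = (if mat_rank N = t then CARD('a) ^ t else 0)"
  have S: "S = UNIV - {- c}" unfolding S_def by (auto simp: add_eq_0_iff)
  have "card (rank_le_borders t a N) = R1 + (if a = 0 then X else 0)" for a
    using card_rank_le_borders[OF N, of t a] unfolding R1_def X_def by simp
  then have "(\<Sum>a \<in> S. card (rank_le_borders t a N)) = (\<Sum>a \<in> S. R1 + (if a = 0 then X else 0))"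
    by (intro sum.cong) simp_all
  also have "\<dots> = card S * R1 + (if 0 \<in> S then X else 0)"
    by (simp add: sum.distrib)
  also have "\<dots> = (CARD('a) - 1) * R1 + (if c \<noteq> 0 then X else 0)"
    unfolding S by (simp add: card_Diff_subset)
  finally show ?thesis unfolding S_def R1_def X_def by simp
qed

section \<open>Counting matrices by their borders\<close>

lemma border_mat_decompose:
  assumes "M \<in> carrier_mat (Suc n) (Suc k)"
  shows "border_mat (M $$ (0, 0)) (vec_tl (row M 0)) (vec_tl (col M 0)) (mat_delete M 0 0) = M"
proof (rule eq_matI)
  fix i j assume "i < dim_row M" "j < dim_col M"
  then show "border_mat (M $$ (0, 0)) (vec_tl (row M 0)) (vec_tl (col M 0)) (mat_delete M 0 0)
      $$ (i, j) = M $$ (i, j)"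
    using assms by (cases i; cases j) (simp_all add: mat_delete_def vec_tl_def)
qed (use assms in auto)

lemma border_mat_parts:
  assumes "N \<in> carrier_mat n k" "u \<in> carrier_vec k" "v \<in> carrier_vec n"
  shows "mat_delete (border_mat a u v N) 0 0 = N"
    "vec_tl (row (border_mat a u v N) 0) = u" "vec_tl (col (border_mat a u v N) 0) = v"
proof -
  show "mat_delete (border_mat a u v N) 0 0 = N"
    using assms by (intro eq_matI) (simp_all add: mat_delete_def)
  show "vec_tl (row (border_mat a u v N) 0) = u" "vec_tl (col (border_mat a u v N) 0) = v"
    using assms by (simp_all add: vec_tl_def vec_eq_iff)
qed

lemma tau_border_mat:
  assumes "N \<in> carrier_mat n k" "r \<le> n" "r \<le> k"
  shows "tau (Suc r) (border_mat a u v N) = a + tau r N"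
proof -
  have "(\<Sum>i<r. border_mat a u v N $$ (Suc i, Suc i)) = (\<Sum>i<r. N $$ (i, i))"
    using assms by (intro sum.cong) auto
  then show ?thesis unfolding tau_def by (simp only: sum.lessThan_Suc_shift index_border_mat)
qed

lemma finite_carrier_mat: "finite (carrier_mat n k :: 'a::finite mat set)"
proof -
  have "carrier_mat n k \<subseteq> (\<lambda>f. mat n k f) ` ({0..<n} \<times> {0..<k} \<rightarrow>\<^sub>E (UNIV :: 'a set))"
  proof
    fix M :: "'a mat" assume M: "M \<in> carrier_mat n k"
    then have "M = mat n k (restrict (\<lambda>p. M $$ p) ({0..<n} \<times> {0..<k}))" by auto
    then show "M \<in> (\<lambda>f. mat n k f) ` ({0..<n} \<times> {0..<k} \<rightarrow>\<^sub>E UNIV)" by auto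
  qed
  then show ?thesis by (rule finite_subset) (intro finite_imageI finite_PiE; simp)
qed

lemma bij_betw_border_mat:
  assumes "r \<le> n" "r \<le> k"
  shows "bij_betw (\<lambda>(N :: 'a::field mat, a, u, v). border_mat a u v N)
    (SIGMA N : carrier_mat n k. SIGMA a : {a. a + tau r N \<noteq> 0}. rank_le_borders t a N)
    {M. M \<in> carrier_mat (Suc n) (Suc k) \<and> mat_rank M \<le> t \<and> tau (Suc r) M \<noteq> 0}"
    (is "bij_betw ?border ?D ?T")
proof -
  define parts where "parts M = (mat_delete M 0 0, M $$ (0, 0), vec_tl (row M 0), vec_tl (col M 0))"
    for M :: "'a mat"
  have parts_carrier: "mat_delete M 0 0 \<in> carrier_mat n k" "vec_tl (row M 0) \<in> carrier_vec k"
    "vec_tl (col M 0) \<in> carrier_vec n" if "M \<in> carrier_mat (Suc n) (Suc k)" for M :: "'a mat"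
    using that by (auto simp: mat_delete_def vec_tl_def)
  show ?thesis
  proof (rule bij_betw_byWitness[where f' = parts])
    show "\<forall>p \<in> ?D. parts (?border p) = p"
      by (auto simp: parts_def rank_le_borders_def border_mat_parts)
    show "\<forall>M \<in> ?T. ?border (parts M) = M"
      using border_mat_decompose by (auto simp: parts_def)
    show "?border ` ?D \<subseteq> ?T"
      using assms by (auto simp: rank_le_borders_def tau_border_mat border_mat_carrier)
    show "parts ` ?T \<subseteq> ?D"
    proof
      fix p assume "p \<in> parts ` ?T"
      then obtain M where p: "p = parts M"
        and M: "M \<in> carrier_mat (Suc n) (Suc k)" "mat_rank M \<le> t" "tau (Suc r) M \<noteq> 0" by auto
      have "tau (Suc r) M = M $$ (0, 0) + tau r (mat_delete M 0 0)"
        using tau_border_mat[OF parts_carrier(1)[OF M(1)] assms] border_mat_decompose[OF M(1)]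
        by metis
      then show "p \<in> ?D"
        unfolding p parts_def using M parts_carrier[OF M(1)] border_mat_decompose[OF M(1)]
        by (auto simp: rank_le_borders_def)
    qed
  qed
qed

lemma card_rank_le_tau_ne_zero:
  fixes ty :: "'a::{finite,field} itself"
  assumes "r \<le> n" "r \<le> k"
  shows "card {M :: 'a mat. M \<in> carrier_mat (Suc n) (Suc k) \<and> mat_rank M \<le> t \<and> tau (Suc r) M \<noteq> 0}
    = (\<Sum>N \<in> (carrier_mat n k :: 'a mat set). (CARD('a) - 1) * card (rank_le_borders t 1 N))
      + CARD('a) ^ t * frak_w ty r t n k"
proof -
  let ?C = "carrier_mat n k :: 'a mat set"
  let ?X = "\<lambda>N :: 'a mat. if tau r N \<noteq> 0 \<and> mat_rank N = t then CARD('a) ^ t else 0"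
  have fin: "finite (rank_le_borders t a N)" for a and N :: "'a mat"
    by (rule finite_subset[of _ "carrier_vec (dim_col N) \<times> carrier_vec (dim_row N)"])
      (auto simp: rank_le_borders_def)
  have "card {M :: 'a mat. M \<in> carrier_mat (Suc n) (Suc k) \<and> mat_rank M \<le> t \<and> tau (Suc r) M \<noteq> 0}
      = card (SIGMA N : ?C. SIGMA a : {a. a + tau r N \<noteq> 0}. rank_le_borders t a N)"
    using bij_betw_same_card[OF bij_betw_border_mat[OF assms, of t]] by (rule sym)
  also have "\<dots> = (\<Sum>N \<in> ?C. \<Sum>a | a + tau r N \<noteq> 0. card (rank_le_borders t a N))"
    by (simp add: fin finite_carrier_mat)
  also have "\<dots> = (\<Sum>N \<in> ?C. (CARD('a) - 1) * card (rank_le_borders t 1 N) + ?X N)"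
    by (intro sum.cong refl sum_card_rank_le_borders) simp
  also have "\<dots> = (\<Sum>N \<in> ?C. (CARD('a) - 1) * card (rank_le_borders t 1 N)) + (\<Sum>N \<in> ?C. ?X N)"
    by (rule sum.distrib)
  also have "(\<Sum>N \<in> ?C. ?X N) = CARD('a) ^ t * frak_w ty r t n k"
    unfolding frak_w_def
    by (simp add: sum.inter_filter[OF finite_carrier_mat, symmetric] conj_commute)
  finally show ?thesis .
qed

lemma tau_eq_0_if_rank_0:
  fixes M :: "'a::{finite,field} mat"
  assumes M: "M \<in> carrier_mat n k" and "r \<le> n" "r \<le> k" and "mat_rank M = 0"
  shows "tau r M = 0"
proof -
  have "col_span M = {0\<^sub>v n}"
  proof -
    have "M *\<^sub>v 0\<^sub>v k = 0\<^sub>v n" using M by (intro eq_vecI) (auto simp: scalar_prod_def)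
    then have "0\<^sub>v n \<in> col_span M" using mult_mat_vec_in_col_span[OF M, of "0\<^sub>v k"] by simp
    moreover have "card (col_span M) = 1" using card_col_span[OF M] \<open>mat_rank M = 0\<close> by simp
    ultimately show ?thesis by (metis card_1_singletonE singletonD)
  qed
  then have "M $$ (i, j) = 0" if "i < n" "j < k" for i j
    using mult_mat_vec_in_col_span[OF M, of "unit_vec k j"] M that
    by (auto simp: vec_eq_iff)
  then show ?thesis unfolding tau_def using assms by (intro sum.neutral) auto
qed

lemma sum_frak_w_eq_card:
  fixes ty :: "'a::{finite,field} itself"
  assumes "r \<le> l" "r \<le> m"
  shows "(\<Sum>s = 1..t. frak_w ty r s l m) =
    card {M :: 'a mat. M \<in> carrier_mat l m \<and> mat_rank M \<le> t \<and> tau r M \<noteq> 0}"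
proof -
  define E where "E s = {M :: 'a mat. M \<in> carrier_mat l m \<and> mat_rank M = s \<and> tau r M \<noteq> 0}" for s
  have "0 < mat_rank M" if "M \<in> carrier_mat l m" "tau r M \<noteq> 0" for M :: "'a mat"
    using tau_eq_0_if_rank_0[OF that(1) assms] that(2) by (auto intro: gr0I)
  then have "{M :: 'a mat. M \<in> carrier_mat l m \<and> mat_rank M \<le> t \<and> tau r M \<noteq> 0} = (\<Union>s \<in> {1..t}. E s)"
    unfolding E_def by (auto simp: Suc_le_eq)
  moreover have "finite (E s)" for s
    unfolding E_def by (rule finite_subset[OF _ finite_carrier_mat[of l m]]) auto
  then have "card (\<Union>s \<in> {1..t}. E s) = (\<Sum>s = 1..t. card (E s))"
    by (intro card_UN_disjoint) (auto simp: E_def)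
  ultimately show ?thesis unfolding frak_w_def E_def by simp
qed

lemma w_hat_Suc_Suc:
  fixes ty :: "'a::{finite,field} itself"
  assumes "r \<le> n" "n \<le> k"
  shows "w_hat ty (Suc r) t (Suc n) (Suc k) =
    real (\<Sum>N \<in> (carrier_mat n k :: 'a mat set). card (rank_le_borders t 1 N))
    + real CARD('a) ^ t * frak_w_hat ty r t n k"
proof -
  let ?S = "\<Sum>N \<in> (carrier_mat n k :: 'a mat set). card (rank_le_borders t 1 N)"
  have q: "real CARD('a) - 1 \<noteq> 0" "1 \<le> CARD('a)" using two_le_card_field[where 'a = 'a] by simp_all
  have "w_hat ty (Suc r) t (Suc n) (Suc k) =
      real (card {M :: 'a mat. M \<in> carrier_mat (Suc n) (Suc k) \<and> mat_rank M \<le> t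
        \<and> tau (Suc r) M \<noteq> 0}) / (real CARD('a) - 1)"
    unfolding w_hat_def frak_w_hat_def sum_divide_distrib[symmetric] of_nat_sum[symmetric]
    using sum_frak_w_eq_card[of "Suc r" "Suc n" "Suc k" ty t] assms by simp
  also have "\<dots> = ((real CARD('a) - 1) * real ?S + real CARD('a) ^ t * real (frak_w ty r t n k))
      / (real CARD('a) - 1)"
    unfolding card_rank_le_tau_ne_zero[OF assms(1) order.trans[OF assms], where ty = ty]
    using q by (simp add: sum_distrib_left[symmetric])
  also have "\<dots> = real ?S + real CARD('a) ^ t * frak_w_hat ty r t n k"
    unfolding frak_w_hat_def using q by (simp add: field_simps)
  finally show ?thesis .
qed

theorem mainTheorem5:
  fixes ty :: "'a::{finite,field} itself"
    and s r t l m :: nat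
  assumes "1 \<le> s" "s \<le> r" "r \<le> l" "l \<le> m" "1 \<le> t" "t < l"
  shows "w_hat ty r t l m - w_hat ty s t l m =
           real (card (UNIV :: 'a set)) ^ t * (frak_w_hat ty (r - 1) t (l - 1) (m - 1)
                                - frak_w_hat ty (s - 1) t (l - 1) (m - 1))
         \<and> w_hat ty r t l m - w_hat ty 1 t l m =
           real (card (UNIV :: 'a set)) ^ t * frak_w_hat ty (r - 1) t (l - 1) (m - 1)"
proof -
  obtain n k where lm: "l = Suc n" "m = Suc k" "n \<le> k"
    using assms by (cases l; cases m) auto
  define C where "C = real (\<Sum>N \<in> (carrier_mat n k :: 'a mat set). card (rank_le_borders t 1 N))"
  have w_hat: "w_hat ty r' t l m = C + real CARD('a) ^ t * frak_w_hat ty (r' - 1) t (l - 1) (m - 1)"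
    if "1 \<le> r'" "r' \<le> l" for r'
    using w_hat_Suc_Suc[of "r' - 1" n k ty t] that lm unfolding C_def by simp
  have "frak_w_hat ty 0 t (l - 1) (m - 1) = 0"
    unfolding frak_w_hat_def frak_w_def tau_def by simp
  then show ?thesis using w_hat[of r] w_hat[of s] w_hat[of 1] assms by (simp add: algebra_simps)
qed

end
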